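(* For all $\mu,\nu\in\mathcal P(\mathcal X)$, the operator $\mathrm{Id}-K_{\mu,\nu}K_{\nu,\mu}$ is a well-defined continuous linear bijection of $C(\mathcal X)/\mathbb R$ (invertible on $C(\mathcal X)/\mathbb R$).
   Context: $(\mathcal X,\mathsf d)$ compact metric space; $\varepsilon>0$; $c\in C(\mathcal X\times\mathcal X)$ symmetric, nonnegative, with $\exp(-c/\varepsilon)$ a positive definite universal kernel. Schrödinger potentials: $T_\varepsilon(f,\mu)(y):=-\varepsilon\log\int\exp((f(x)-c(x,y))/\varepsilon)d\mu(x)$; $(f_{\mu,\nu},f_{\nu,\mu})$ the unique continuous pair with $f_{\mu,\nu}=T_\varepsilon(f_{\nu,\mu},\nu)$, $f_{\nu,\mu}=T_\varepsilon(f_{\mu,\nu},\mu)$, $\int f_{\mu,\nu}d\mu=\int f_{\nu,\mu}d\nu$. $k_{\mu,\nu}(x,y):=\exp((f_{\mu,\nu}(x)+f_{\nu,\mu}(y)-c(x,y))/\varepsilon)$; $H_{\mu,\nu}[\sigma](x):=\int k_{\mu,\nu}(x,y)d\sigma(y)$ for $\sigma\in\mathcal M(\mathcal X)$; $K_{\mu,\nu}[\phi]:=H_{\mu,\nu}[\phi\nu]$ for $\phi\in C(\mathcal X)$ (so $K_{\mu,\nu}[1]=1$). $C(\mathcal X)/\mathbb R$ carries the quotient norm $\inf_{\lambda}\|\phi-\lambda\|_\infty$. *)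

theory Defs
  imports "HOL-Analysis.Analysis" "HOL-Probability.Probability"
begin

definition sup_norm :: "('a \<Rightarrow> real) \<Rightarrow> real" where
  "sup_norm f = (SUP x. \<bar>f x\<bar>)"

definition quot_norm :: "('a \<Rightarrow> real) \<Rightarrow> real" where
  "quot_norm \<phi> = (INF l. sup_norm (\<lambda>x. \<phi> x - l))"

definition pos_def_kernel :: "('a \<Rightarrow> 'a \<Rightarrow> real) \<Rightarrow> bool" where
  "pos_def_kernel k \<longleftrightarrow> (\<forall>x y. k x y = k y x) \<and>
     (\<forall>n (xs :: nat \<Rightarrow> 'a) (a :: nat \<Rightarrow> real).
        (\<Sum>i<n. \<Sum>j<n. a i * a j * k (xs i) (xs j)) \<ge> 0)"

definition universal_kernel :: "('a::topological_space \<Rightarrow> 'a \<Rightarrow> real) \<Rightarrow> bool" where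
  "universal_kernel k \<longleftrightarrow> (\<forall>x. continuous_on UNIV (k x)) \<and>
     (\<forall>g. continuous_on UNIV g \<longrightarrow> (\<forall>e>0. \<exists>n (xs :: nat \<Rightarrow> 'a) (a :: nat \<Rightarrow> real).
        \<forall>y. \<bar>g y - (\<Sum>i<n. a i * k (xs i) y)\<bar> < e))"

definition T_eps :: "real \<Rightarrow> ('a \<Rightarrow> 'a \<Rightarrow> real) \<Rightarrow> ('a \<Rightarrow> real) \<Rightarrow> 'a measure \<Rightarrow> 'a \<Rightarrow> real" where
  "T_eps eps c f \<mu> y = - eps * ln (\<integral>x. exp ((f x - c x y) / eps) \<partial>\<mu>)"

definition schr_pair :: "real \<Rightarrow> ('a::topological_space \<Rightarrow> 'a \<Rightarrow> real) \<Rightarrow> 'a measure \<Rightarrow> 'a measure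
    \<Rightarrow> ('a \<Rightarrow> real) \<times> ('a \<Rightarrow> real)" where
  "schr_pair eps c \<mu> \<nu> = (THE p. continuous_on UNIV (fst p) \<and> continuous_on UNIV (snd p) \<and>
      fst p = T_eps eps c (snd p) \<nu> \<and> snd p = T_eps eps c (fst p) \<mu> \<and>
      (\<integral>x. fst p x \<partial>\<mu>) = (\<integral>x. snd p x \<partial>\<nu>))"

text \<open>f_{mu,nu}; note f_{nu,mu} = schr_pot eps c nu mu.\<close>
definition schr_pot :: "real \<Rightarrow> ('a::topological_space \<Rightarrow> 'a \<Rightarrow> real) \<Rightarrow> 'a measure \<Rightarrow> 'a measure
    \<Rightarrow> 'a \<Rightarrow> real" where
  "schr_pot eps c \<mu> \<nu> = fst (schr_pair eps c \<mu> \<nu>)"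

definition k_eps :: "real \<Rightarrow> ('a::topological_space \<Rightarrow> 'a \<Rightarrow> real) \<Rightarrow> 'a measure \<Rightarrow> 'a measure
    \<Rightarrow> 'a \<Rightarrow> 'a \<Rightarrow> real" where
  "k_eps eps c \<mu> \<nu> x y = exp ((schr_pot eps c \<mu> \<nu> x + schr_pot eps c \<nu> \<mu> y - c x y) / eps)"

definition H_op :: "real \<Rightarrow> ('a::topological_space \<Rightarrow> 'a \<Rightarrow> real) \<Rightarrow> 'a measure \<Rightarrow> 'a measure
    \<Rightarrow> 'a measure \<Rightarrow> 'a \<Rightarrow> real" where
  "H_op eps c \<mu> \<nu> \<sigma> x = (\<integral>y. k_eps eps c \<mu> \<nu> x y \<partial>\<sigma>)"

definition K_op :: "real \<Rightarrow> ('a::topological_space \<Rightarrow> 'a \<Rightarrow> real) \<Rightarrow> 'a measure \<Rightarrow> 'a measure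
    \<Rightarrow> ('a \<Rightarrow> real) \<Rightarrow> 'a \<Rightarrow> real" where
  "K_op eps c \<mu> \<nu> \<phi> x = (\<integral>y. k_eps eps c \<mu> \<nu> x y * \<phi> y \<partial>\<nu>)"

definition L_op :: "real \<Rightarrow> ('a::topological_space \<Rightarrow> 'a \<Rightarrow> real) \<Rightarrow> 'a measure \<Rightarrow> 'a measure
    \<Rightarrow> ('a \<Rightarrow> real) \<Rightarrow> 'a \<Rightarrow> real" where
  "L_op eps c \<mu> \<nu> \<phi> x = \<phi> x - K_op eps c \<mu> \<nu> (K_op eps c \<nu> \<mu> \<phi>) x"

end

theory Submission
  imports Defs
begin

text \<open>
  Write \<open>C\<close> for the maximum of the cost and \<open>\<theta> = exp (-2 C / eps)\<close>. The kernels
  \<open>k\<^sub>\<mu>\<^sub>,\<^sub>\<nu>\<close> and \<open>k\<^sub>\<nu>\<^sub>,\<^sub>\<mu>\<close> are continuous Markov kernels with the Doeblin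
  minorisation \<open>\<theta> k(x', y) \<le> k(x, y)\<close>, so \<open>P = K\<^sub>\<mu>\<^sub>,\<^sub>\<nu> K\<^sub>\<nu>\<^sub>,\<^sub>\<mu>\<close> is a positive
  unital operator contracting the oscillation \<open>sup \<phi> - inf \<phi>\<close> by the factor
  \<open>(1 - \<theta>)\<^sup>2 < 1\<close>. Hence \<open>\<phi> - P \<phi>\<close> is constant only for constant \<open>\<phi>\<close>, and
  \<open>\<phi> \<mapsto> \<psi> + P \<phi>\<close> has a fixed point modulo constants, the uniform limit of its iterates
  renormalised at a base point; this gives surjectivity. Boundedness for the quotient
  norm follows from \<open>\<bar>P \<phi>\<bar> \<le> sup \<bar>\<phi>\<bar>\<close>. The same minorisation makes the Sinkhorn map
  \<open>f \<mapsto> T(T(f, \<mu>), \<nu>)\<close> an oscillation contraction, which yields the Schroedinger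
  potentials; a Fubini argument shows that its fixed point modulo constants is an exact
  one.
\<close>

section \<open>Oscillation contractions on a compact metric space\<close>

lemma continuous_on_compact_UNIV_bounded:
  fixes h :: "'a::metric_space \<Rightarrow> real"
  assumes "compact (UNIV :: 'a set)" and "continuous_on UNIV h"
  obtains B where "\<And>x. \<bar>h x\<bar> \<le> B"
proof -
  have "bounded (range h)"
    using assms compact_continuous_image compact_imp_bounded by blast
  with that show ?thesis by (fastforce simp: bounded_iff)
qed

lemma continuous_on_prod_sections:
  assumes "continuous_on UNIV (\<lambda>p. h (fst p) (snd p))"
  shows "continuous_on UNIV (h x)" and "continuous_on UNIV (\<lambda>x. h x y)"
  by (rule continuous_on_compose2[OF assms, of _ "Pair x", simplified];
      auto intro: continuous_intros)
     (rule continuous_on_compose2[OF assms, of _ "\<lambda>x. (x, y)", simplified];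
      auto intro: continuous_intros)

lemma continuous_on_comp_fst: "continuous_on UNIV f \<Longrightarrow> continuous_on UNIV (\<lambda>p. f (fst p))"
  by (rule continuous_on_compose2[of UNIV f]) (auto intro: continuous_intros)

lemma continuous_on_comp_snd: "continuous_on UNIV f \<Longrightarrow> continuous_on UNIV (\<lambda>p. f (snd p))"
  by (rule continuous_on_compose2[of UNIV f]) (auto intro: continuous_intros)

lemma continuous_on_prod_swap:
  "continuous_on UNIV (\<lambda>p. h (fst p) (snd p)) \<Longrightarrow> continuous_on UNIV (\<lambda>p. h (snd p) (fst p))"
  by (rule continuous_on_compose2[of UNIV "\<lambda>p. h (fst p) (snd p)" _ prod.swap, simplified])
     (auto intro: continuous_intros)

lemma abs_le_sup_norm:
  fixes h :: "'a::metric_space \<Rightarrow> real"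
  assumes "compact (UNIV :: 'a set)" and "continuous_on UNIV h"
  shows "\<bar>h x\<bar> \<le> sup_norm h"
proof -
  obtain B where "\<And>x. \<bar>h x\<bar> \<le> B"
    using continuous_on_compact_UNIV_bounded[OF assms] by blast
  then have "bdd_above (range (\<lambda>x. \<bar>h x\<bar>))" by (rule bdd_aboveI2)
  then show ?thesis unfolding sup_norm_def by (rule cSUP_upper[OF UNIV_I])
qed

lemma sup_norm_le: "(\<And>x. \<bar>h x\<bar> \<le> B) \<Longrightarrow> sup_norm h \<le> B"
  unfolding sup_norm_def by (rule cSUP_least) auto

definition osc_le :: "('a \<Rightarrow> real) \<Rightarrow> real \<Rightarrow> bool" where
  "osc_le h D \<longleftrightarrow> (\<forall>x x'. h x - h x' \<le> D)"

lemma constant_if_osc_contracting: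
  fixes h :: "'a::metric_space \<Rightarrow> real"
  assumes cpt: "compact (UNIV :: 'a set)" and h: "continuous_on UNIV h" and "\<kappa> < 1"
    and contr: "\<And>D. osc_le h D \<Longrightarrow> osc_le h (\<kappa> * D)"
  shows "h x = h x'"
proof -
  obtain xmax where xmax: "\<And>x. h x \<le> h xmax"
    using continuous_attains_sup[OF cpt _ h] by auto
  obtain xmin where xmin: "\<And>x. h xmin \<le> h x"
    using continuous_attains_inf[OF cpt _ h] by auto
  define D where "D = h xmax - h xmin"
  have "osc_le h D"
    unfolding osc_le_def D_def using xmax xmin by (smt (verit))
  then have "D \<le> \<kappa> * D" using contr unfolding osc_le_def D_def by blast
  moreover have "0 \<le> D" using xmax[of xmin] by (simp add: D_def)
  ultimately have "D = 0" using \<open>\<kappa> < 1\<close> by (smt (verit) mult_le_cancel_right1)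
  then show ?thesis using xmax[of x] xmax[of x'] xmin[of x] xmin[of x'] by (simp add: D_def)
qed

lemma uniform_limit_of_geometric_increments:
  fixes s :: "nat \<Rightarrow> 'a \<Rightarrow> real"
  assumes incr: "\<And>n x. \<bar>s (Suc n) x - s n x\<bar> \<le> \<kappa> ^ n * D" and "0 \<le> \<kappa>" "\<kappa> < 1"
  obtains S where "uniform_limit UNIV s S sequentially"
proof -
  have "summable (\<lambda>n. \<kappa> ^ n * D)"
    using assms by (intro summable_mult2 summable_geometric) simp
  then have "uniform_limit UNIV (\<lambda>n x. s 0 x + (\<Sum>i<n. s (Suc i) x - s i x))
      (\<lambda>x. s 0 x + (\<Sum>i. s (Suc i) x - s i x)) sequentially"
    using incr by (intro uniform_limit_add uniform_limit_const Weierstrass_m_test) auto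
  moreover have "s 0 x + (\<Sum>i<n. s (Suc i) x - s i x) = s n x" for n x
    by (simp add: sum_lessThan_telescope[of "\<lambda>i. s i x"])
  ultimately show ?thesis using that by simp
qed

lemma uniform_limit_of_iterates_is_fixpoint:
  fixes G :: "('a \<Rightarrow> real) \<Rightarrow> 'a \<Rightarrow> real"
  assumes S: "uniform_limit UNIV s S sequentially" and iter: "\<And>n. s (Suc n) = G (s n)"
    and lipschitz: "\<And>n e. (\<And>y. \<bar>s n y - S y\<bar> \<le> e) \<Longrightarrow> \<bar>G (s n) x - G S x\<bar> \<le> L * e"
    and "0 \<le> L"
  shows "G S x = S x"
proof (rule LIMSEQ_unique)
  show "(\<lambda>n. s (Suc n) x) \<longlonglongrightarrow> S x"
    using tendsto_uniform_limitI[OF S] LIMSEQ_Suc by blast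
  show "(\<lambda>n. s (Suc n) x) \<longlonglongrightarrow> G S x"
  proof (rule tendstoI)
    fix e :: real assume "0 < e"
    with \<open>0 \<le> L\<close> have "0 < e / (L + 1)" and "L * (e / (L + 1)) < e"
      by (simp_all add: field_simps)
    from uniform_limitD[OF S this(1)]
    show "\<forall>\<^sub>F n in sequentially. dist (s (Suc n) x) (G S x) < e"
    proof eventually_elim
      case (elim n)
      then have "\<bar>s n y - S y\<bar> \<le> e / (L + 1)" for y
        by (simp add: dist_real_def less_imp_le)
      then have "\<bar>G (s n) x - G S x\<bar> \<le> L * (e / (L + 1))" by (rule lipschitz)
      then show ?case
        using \<open>L * (e / (L + 1)) < e\<close> by (simp add: iter dist_real_def)
    qed
  qed
qed

lemma osc_contraction_fixpoint_mod_const: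
  fixes F :: "('a::metric_space \<Rightarrow> real) \<Rightarrow> 'a \<Rightarrow> real"
  assumes cpt: "compact (UNIV :: 'a set)"
    and F_cont: "\<And>f. continuous_on UNIV f \<Longrightarrow> continuous_on UNIV (F f)"
    and F_osc: "\<And>f g D. continuous_on UNIV f \<Longrightarrow> continuous_on UNIV g \<Longrightarrow>
      osc_le (\<lambda>x. f x - g x) D \<Longrightarrow> osc_le (\<lambda>x. F f x - F g x) (\<kappa> * D)"
    and F_nonexp: "\<And>f g e x. continuous_on UNIV f \<Longrightarrow> continuous_on UNIV g \<Longrightarrow>
      (\<And>x. \<bar>f x - g x\<bar> \<le> e) \<Longrightarrow> \<bar>F f x - F g x\<bar> \<le> e"
    and \<kappa>: "0 \<le> \<kappa>" "\<kappa> < 1"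
  obtains f k where "continuous_on UNIV f" and "\<And>x. F f x = f x + k"
proof -
  define x0 :: 'a where "x0 = undefined"
  define G where "G f x = F f x - F f x0" for f x
  define s where "s n = (G ^^ n) (\<lambda>_. 0)" for n
  have s_Suc: "s (Suc n) = G (s n)" for n by (simp add: s_def)
  have s_cont: "continuous_on UNIV (s n)" for n
    by (induction n) (auto simp: s_def G_def intro!: continuous_intros F_cont)
  have s_x0: "s n x0 = 0" for n
    by (cases n) (auto simp: s_def G_def)
  have "G f x - G g x - (G f x' - G g x') = F f x - F g x - (F f x' - F g x')" for f g x x'
    by (simp add: G_def)
  then have G_osc: "osc_le (\<lambda>x. G f x - G g x) D = osc_le (\<lambda>x. F f x - F g x) D" for f g D
    by (simp add: osc_le_def)
  obtain B where B: "\<And>x. \<bar>s 1 x\<bar> \<le> B"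
    using continuous_on_compact_UNIV_bounded[OF cpt s_cont] by blast
  have osc_incr: "osc_le (\<lambda>x. s (Suc n) x - s n x) (\<kappa> ^ n * (2 * B))" for n
  proof (induction n)
    case 0
    show ?case using B by (simp add: osc_le_def s_def abs_le_iff) (smt (verit))
  next
    case (Suc n)
    then have "osc_le (\<lambda>x. F (s (Suc n)) x - F (s n) x) (\<kappa> * (\<kappa> ^ n * (2 * B)))"
      by (rule F_osc[OF s_cont s_cont])
    then show ?case
      unfolding s_Suc[of "Suc n"] s_Suc[of n] G_osc by (simp add: mult.assoc)
  qed
  have "\<bar>s (Suc n) x - s n x\<bar> \<le> \<kappa> ^ n * (2 * B)" for n x
    using osc_incr[of n] unfolding osc_le_def by (smt (verit) s_x0)
  then obtain S where S: "uniform_limit UNIV s S sequentially"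
    using uniform_limit_of_geometric_increments \<kappa> by blast
  have S_cont: "continuous_on UNIV S"
    by (rule uniform_limit_theorem[OF _ S]) (auto simp: s_cont)
  have "G S x = S x" for x
  proof (rule uniform_limit_of_iterates_is_fixpoint[OF S s_Suc])
    fix n e assume "\<And>y. \<bar>s n y - S y\<bar> \<le> e"
    then have "\<bar>F (s n) y - F S y\<bar> \<le> e" for y by (rule F_nonexp[OF s_cont S_cont])
    from this[of x] this[of x0] show "\<bar>G (s n) x - G S x\<bar> \<le> 2 * e"
      unfolding G_def by linarith
  qed simp
  then have "F S x = S x + F S x0" for x
    unfolding G_def by (smt (verit))
  with S_cont show ?thesis by (rule that)
qed

section \<open>Continuous functions integrated against Borel probability measures\<close>

locale compact_borel_prob = prob_space M for M :: "'a::metric_space measure" +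
  assumes compact_UNIV: "compact (UNIV :: 'a set)"
    and sets_M: "sets M = sets borel"
begin

lemma borel_measurable_continuous: "continuous_on UNIV h \<Longrightarrow> (h :: 'a \<Rightarrow> real) \<in> borel_measurable M"
  using borel_measurable_continuous_onI measurable_cong_sets[OF sets_M refl] by blast

lemma integrable_continuous: "continuous_on UNIV h \<Longrightarrow> integrable M (h :: 'a \<Rightarrow> real)"
proof -
  assume h: "continuous_on UNIV h"
  obtain B where "\<And>x. \<bar>h x\<bar> \<le> B"
    using continuous_on_compact_UNIV_bounded[OF compact_UNIV h] by blast
  then have "AE x in M. norm (h x) \<le> B" by simp
  then show ?thesis by (rule integrable_const_bound[OF _ borel_measurable_continuous[OF h]])
qed

lemma integral_mono_continuous:
  fixes g h :: "'a \<Rightarrow> real"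
  shows "continuous_on UNIV g \<Longrightarrow> continuous_on UNIV h \<Longrightarrow> (\<And>x. g x \<le> h x) \<Longrightarrow>
    (\<integral>x. g x \<partial>M) \<le> (\<integral>x. h x \<partial>M)"
  by (intro integral_mono integrable_continuous) auto

lemma integral_le_const:
  fixes h :: "'a \<Rightarrow> real"
  shows "continuous_on UNIV h \<Longrightarrow> (\<And>x. h x \<le> a) \<Longrightarrow> (\<integral>x. h x \<partial>M) \<le> a"
  using integral_mono_continuous[of h "\<lambda>_. a"] by (simp add: prob_space)

lemma const_le_integral:
  fixes h :: "'a \<Rightarrow> real"
  shows "continuous_on UNIV h \<Longrightarrow> (\<And>x. a \<le> h x) \<Longrightarrow> a \<le> (\<integral>x. h x \<partial>M)"
  using integral_mono_continuous[of "\<lambda>_. a" h] by (simp add: prob_space)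

lemma integral_pos_continuous:
  fixes h :: "'a \<Rightarrow> real"
  assumes h: "continuous_on UNIV h" and pos: "\<And>x. 0 < h x"
  shows "0 < (\<integral>x. h x \<partial>M)"
proof -
  obtain x0 where "\<And>x. h x0 \<le> h x"
    using continuous_attains_inf[OF compact_UNIV _ h] by auto
  then have "h x0 \<le> (\<integral>x. h x \<partial>M)" by (rule const_le_integral[OF h])
  with pos[of x0] show ?thesis by simp
qed

lemma abs_integral_diff_le:
  fixes g h :: "'a \<Rightarrow> real"
  assumes g: "continuous_on UNIV g" and h: "continuous_on UNIV h" and le: "\<And>x. \<bar>g x - h x\<bar> \<le> e"
  shows "\<bar>(\<integral>x. g x \<partial>M) - (\<integral>x. h x \<partial>M)\<bar> \<le> e"
proof -
  have gh: "continuous_on UNIV (\<lambda>x. g x - h x)" by (intro continuous_intros g h)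
  have "(\<integral>x. g x - h x \<partial>M) = (\<integral>x. g x \<partial>M) - (\<integral>x. h x \<partial>M)"
    by (intro Bochner_Integration.integral_diff integrable_continuous g h)
  moreover have "- e \<le> (\<integral>x. g x - h x \<partial>M)" "(\<integral>x. g x - h x \<partial>M) \<le> e"
    using le by (intro const_le_integral integral_le_const gh; smt (verit))+
  ultimately show ?thesis by linarith
qed

lemma continuous_on_parametric_integral:
  fixes h :: "'b::metric_space \<Rightarrow> 'a \<Rightarrow> real"
  assumes cpt: "compact (UNIV :: 'b set)" and h: "continuous_on UNIV (\<lambda>p. h (fst p) (snd p))"
  shows "continuous_on UNIV (\<lambda>x. \<integral>y. h x y \<partial>M)"
  unfolding continuous_on_iff
proof (intro ballI allI impI)
  fix x and e :: real assume "0 < e"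
  have "uniformly_continuous_on UNIV (\<lambda>p. h (fst p) (snd p))"
    using compact_uniformly_continuous[OF h] compact_Times[OF cpt compact_UNIV] by simp
  from this[unfolded uniformly_continuous_on_def, rule_format, of "e / 2"] \<open>0 < e\<close>
  obtain d where "0 < d" and d: "\<And>p p'. dist p' p < d \<Longrightarrow>
      dist (h (fst p') (snd p')) (h (fst p) (snd p)) < e / 2"
    by auto
  show "\<exists>d>0. \<forall>x'\<in>UNIV. dist x' x < d \<longrightarrow> dist (\<integral>y. h x' y \<partial>M) (\<integral>y. h x y \<partial>M) < e"
  proof (intro exI conjI ballI impI)
    fix x' assume "dist x' x < d"
    then have "\<bar>h x' y - h x y\<bar> \<le> e / 2" for y
      using d[of "(x, y)" "(x', y)"] by (simp add: dist_Pair_Pair dist_real_def dist_commute abs_minus_commute)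
    then have "\<bar>(\<integral>y. h x' y \<partial>M) - (\<integral>y. h x y \<partial>M)\<bar> \<le> e / 2"
      by (rule abs_integral_diff_le[OF continuous_on_prod_sections(1)[OF h]
          continuous_on_prod_sections(1)[OF h]])
    then show "dist (\<integral>y. h x' y \<partial>M) (\<integral>y. h x y \<partial>M) < e"
      using \<open>0 < e\<close> by (simp add: dist_real_def)
  qed (fact \<open>0 < d\<close>)
qed

end

lemma partition_of_unity_balls:
  assumes cpt: "compact (UNIV :: 'a::metric_space set)" and "0 < d"
  obtains Z and p :: "'a::metric_space \<Rightarrow> 'a \<Rightarrow> real" where "finite Z" and "\<And>z. continuous_on UNIV (p z)"
    and "\<And>z x. 0 \<le> p z x" and "\<And>x. (\<Sum>z\<in>Z. p z x) = 1" and "\<And>z x. d \<le> dist x z \<Longrightarrow> p z x = 0"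
proof -
  have "\<exists>Z. finite Z \<and> Z \<subseteq> UNIV \<and> (UNIV :: 'a set) \<subseteq> (\<Union>z\<in>Z. ball z d)"
    by (rule seq_compact_imp_totally_bounded[OF compact_imp_seq_compact[OF cpt], rule_format,
        OF \<open>0 < d\<close>])
  then obtain Z where Z: "finite Z \<and> Z \<subseteq> UNIV \<and> (UNIV :: 'a set) \<subseteq> (\<Union>z\<in>Z. ball z d)" ..
  note Z_finite = conjunct1[OF Z] and Z_cover = conjunct2[OF conjunct2[OF Z]]
  define w :: "'a \<Rightarrow> 'a \<Rightarrow> real" where "w z x = max 0 (d - dist x z)" for z x
  define W where "W x = (\<Sum>z\<in>Z. w z x)" for x
  have w_nonneg: "0 \<le> w z x" for z x by (simp add: w_def)
  have W_pos: "0 < W x" for x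
  proof -
    have "x \<in> (\<Union>z\<in>Z. ball z d)" using Z_cover by (rule subsetD) (rule UNIV_I)
    then obtain z where "z \<in> Z" "x \<in> ball z d" by (rule UN_E)
    then have "0 < w z x" by (simp add: w_def dist_commute)
    also have "w z x \<le> W x"
      unfolding W_def by (rule member_le_sum[OF \<open>z \<in> Z\<close> w_nonneg Z_finite])
    finally show ?thesis .
  qed
  have w_cont: "continuous_on UNIV (w z)" for z
    unfolding w_def by (intro continuous_intros)
  have "W x \<noteq> 0" for x
    using W_pos[of x] by simp
  then have cont: "continuous_on UNIV (\<lambda>x. w z x / W x)" for z
    unfolding W_def by (intro continuous_on_divide continuous_on_sum w_cont) auto
  have nonneg: "0 \<le> w z x / W x" for z x by (simp add: w_nonneg W_pos less_imp_le)
  have sum: "(\<Sum>z\<in>Z. w z x / W x) = 1" for x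
    using W_pos[of x] by (simp add: W_def sum_divide_distrib[symmetric])
  have local: "w z x / W x = 0" if "d \<le> dist x z" for z x
    using that by (simp add: w_def)
  show ?thesis by (rule that[OF Z_finite cont nonneg sum local])
qed

lemma uniform_approx_by_sums_of_products:
  fixes a :: "'a::metric_space \<Rightarrow> 'b::metric_space \<Rightarrow> real"
  assumes cpt: "compact (UNIV :: 'a set)" "compact (UNIV :: 'b set)"
    and a: "continuous_on UNIV (\<lambda>p. a (fst p) (snd p))" and "0 < \<eta>"
  obtains Z and p :: "'a \<Rightarrow> 'a \<Rightarrow> real" where "\<And>z. continuous_on UNIV (p z)"
    and "\<And>x y. \<bar>(\<Sum>z\<in>Z. p z x * a z y) - a x y\<bar> \<le> \<eta>"
proof -
  have "uniformly_continuous_on UNIV (\<lambda>p. a (fst p) (snd p))"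
    using compact_uniformly_continuous[OF a] compact_Times[OF cpt] by simp
  from this[unfolded uniformly_continuous_on_def, rule_format, OF \<open>0 < \<eta>\<close>]
  obtain d where "0 < d" and d: "\<And>p p'. dist p' p < d \<Longrightarrow>
      dist (a (fst p') (snd p')) (a (fst p) (snd p)) < \<eta>"
    by auto
  obtain Z and p :: "'a \<Rightarrow> 'a \<Rightarrow> real" where "finite Z" and p_cont: "\<And>z. continuous_on UNIV (p z)"
    and p_nonneg: "\<And>z x. 0 \<le> p z x" and p_sum: "\<And>x. (\<Sum>z\<in>Z. p z x) = 1"
    and p_local: "\<And>z x. d \<le> dist x z \<Longrightarrow> p z x = 0"
    by (fact partition_of_unity_balls[OF cpt(1) \<open>0 < d\<close>])
  have p_close: "p z x * \<bar>a z y - a x y\<bar> \<le> p z x * \<eta>" for z x y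
  proof (cases "dist x z < d")
    case True
    then have "\<bar>a z y - a x y\<bar> < \<eta>"
      using d[of "(x, y)" "(z, y)"] by (simp add: dist_Pair_Pair dist_real_def dist_commute)
    then show ?thesis using p_nonneg by (intro mult_left_mono) auto
  next
    case False
    then show ?thesis by (simp add: p_local)
  qed
  have "\<bar>(\<Sum>z\<in>Z. p z x * a z y) - a x y\<bar> \<le> \<eta>" for x y
  proof -
    have "(\<Sum>z\<in>Z. p z x * a z y) - a x y = (\<Sum>z\<in>Z. p z x * (a z y - a x y))"
      using p_sum[of x] by (simp add: right_diff_distrib sum_subtractf sum_distrib_right[symmetric])
    also have "\<bar>\<dots>\<bar> \<le> (\<Sum>z\<in>Z. p z x * \<eta>)"
      using p_close p_nonneg by (intro order_trans[OF sum_abs] sum_mono) (simp add: abs_mult)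
    also have "\<dots> = \<eta>" using p_sum[of x] by (simp add: sum_distrib_right[symmetric])
    finally show ?thesis .
  qed
  with p_cont show ?thesis by (rule that)
qed

lemma integral_swap_continuous:
  fixes a :: "'a::metric_space \<Rightarrow> 'b::metric_space \<Rightarrow> real"
  assumes "compact_borel_prob \<mu>" and "compact_borel_prob \<nu>"
    and a: "continuous_on UNIV (\<lambda>p. a (fst p) (snd p))"
  shows "(\<integral>y. (\<integral>x. a x y \<partial>\<mu>) \<partial>\<nu>) = (\<integral>x. (\<integral>y. a x y \<partial>\<nu>) \<partial>\<mu>)"
proof -
  interpret \<mu>: compact_borel_prob \<mu> by fact
  interpret \<nu>: compact_borel_prob \<nu> by fact
  have a_sections: "continuous_on UNIV (\<lambda>x. a x y)" "continuous_on UNIV (a x)" for x y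
    by (rule continuous_on_prod_sections[OF a])+
  have inner_cont: "continuous_on UNIV (\<lambda>y. \<integral>x. a x y \<partial>\<mu>)" "continuous_on UNIV (\<lambda>x. \<integral>y. a x y \<partial>\<nu>)"
    by (rule \<mu>.continuous_on_parametric_integral[OF \<nu>.compact_UNIV continuous_on_prod_swap[OF a]])
       (rule \<nu>.continuous_on_parametric_integral[OF \<mu>.compact_UNIV a])
  have "\<bar>(\<integral>y. (\<integral>x. a x y \<partial>\<mu>) \<partial>\<nu>) - (\<integral>x. (\<integral>y. a x y \<partial>\<nu>) \<partial>\<mu>)\<bar> \<le> 2 * \<eta>" if "0 < \<eta>" for \<eta>
  proof (rule uniform_approx_by_sums_of_products[OF \<mu>.compact_UNIV \<nu>.compact_UNIV a \<open>0 < \<eta>\<close>])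
    fix Z and p :: "'a \<Rightarrow> 'a \<Rightarrow> real"
    assume p: "\<And>z. continuous_on UNIV (p z)"
      and approx: "\<And>x y. \<bar>(\<Sum>z\<in>Z. p z x * a z y) - a x y\<bar> \<le> \<eta>"
    define I where "I = (\<Sum>z\<in>Z. (\<integral>x. p z x \<partial>\<mu>) * (\<integral>y. a z y \<partial>\<nu>))"
    have "\<bar>(\<Sum>z\<in>Z. (\<integral>x. p z x \<partial>\<mu>) * a z y) - (\<integral>x. a x y \<partial>\<mu>)\<bar> \<le> \<eta>" for y
    proof -
      have "(\<integral>x. (\<Sum>z\<in>Z. p z x * a z y) \<partial>\<mu>) = (\<Sum>z\<in>Z. (\<integral>x. p z x \<partial>\<mu>) * a z y)"
        by (simp add: Bochner_Integration.integral_sum \<mu>.integrable_continuous p continuous_intros)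
      moreover have "\<bar>(\<integral>x. (\<Sum>z\<in>Z. p z x * a z y) \<partial>\<mu>) - (\<integral>x. a x y \<partial>\<mu>)\<bar> \<le> \<eta>"
        using approx by (intro \<mu>.abs_integral_diff_le continuous_intros p a_sections)
      ultimately show ?thesis by simp
    qed
    then have "\<bar>I - (\<integral>y. (\<integral>x. a x y \<partial>\<mu>) \<partial>\<nu>)\<bar> \<le> \<eta>"
      using \<nu>.abs_integral_diff_le[of "\<lambda>y. \<Sum>z\<in>Z. (\<integral>x. p z x \<partial>\<mu>) * a z y"] inner_cont(1)
      by (simp add: I_def Bochner_Integration.integral_sum \<nu>.integrable_continuous a_sections
          continuous_intros)
    moreover have "\<bar>I - (\<integral>x. (\<integral>y. a x y \<partial>\<nu>) \<partial>\<mu>)\<bar> \<le> \<eta>"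
    proof -
      have "(\<integral>y. (\<Sum>z\<in>Z. p z x * a z y) \<partial>\<nu>) = (\<Sum>z\<in>Z. p z x * (\<integral>y. a z y \<partial>\<nu>))" for x
        by (simp add: Bochner_Integration.integral_sum \<nu>.integrable_continuous a_sections
            continuous_intros)
      moreover have "\<bar>(\<integral>y. (\<Sum>z\<in>Z. p z x * a z y) \<partial>\<nu>) - (\<integral>y. a x y \<partial>\<nu>)\<bar> \<le> \<eta>" for x
        using approx by (intro \<nu>.abs_integral_diff_le continuous_intros a_sections)
      ultimately have "\<bar>(\<Sum>z\<in>Z. p z x * (\<integral>y. a z y \<partial>\<nu>)) - (\<integral>y. a x y \<partial>\<nu>)\<bar> \<le> \<eta>" for x
        by simp
      then show ?thesis
        using \<mu>.abs_integral_diff_le[of "\<lambda>x. \<Sum>z\<in>Z. p z x * (\<integral>y. a z y \<partial>\<nu>)"] inner_cont(2)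
        by (simp add: I_def Bochner_Integration.integral_sum \<mu>.integrable_continuous p
            continuous_intros mult.commute)
    qed
    ultimately show ?thesis by linarith
  qed
  then show ?thesis
    by (smt (verit, best) field_le_epsilon half_gt_zero)
qed

section \<open>Markov operators contracting the oscillation\<close>

locale markov_operator =
  fixes P :: "('a::topological_space \<Rightarrow> real) \<Rightarrow> 'a \<Rightarrow> real"
  assumes continuous: "continuous_on UNIV \<phi> \<Longrightarrow> continuous_on UNIV (P \<phi>)"
    and linear: "continuous_on UNIV \<phi> \<Longrightarrow> continuous_on UNIV \<psi> \<Longrightarrow>
      P (\<lambda>y. a * \<phi> y + b * \<psi> y) = (\<lambda>x. a * P \<phi> x + b * P \<psi> x)"
    and positive: "continuous_on UNIV \<phi> \<Longrightarrow> (\<And>y. 0 \<le> \<phi> y) \<Longrightarrow> 0 \<le> P \<phi> x"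
    and unital: "P (\<lambda>_. 1) = (\<lambda>_. 1)"
begin

lemma const: "P (\<lambda>_. a) = (\<lambda>_. a)"
  using linear[of "\<lambda>_. 1" "\<lambda>_. 1" a 0] by (simp add: unital)

lemma add_const: "continuous_on UNIV \<phi> \<Longrightarrow> P (\<lambda>y. \<phi> y + l) x = P \<phi> x + l"
  using linear[of \<phi> "\<lambda>_. 1" 1 l] by (simp add: unital)

lemma diff:
  "continuous_on UNIV \<phi> \<Longrightarrow> continuous_on UNIV \<psi> \<Longrightarrow> P (\<lambda>y. \<phi> y - \<psi> y) x = P \<phi> x - P \<psi> x"
  using linear[of \<phi> \<psi> 1 "- 1"] by simp

lemma mono:
  assumes "continuous_on UNIV \<phi>" "continuous_on UNIV \<psi>" "\<And>y. \<phi> y \<le> \<psi> y"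
  shows "P \<phi> x \<le> P \<psi> x"
  using positive[of "\<lambda>y. \<psi> y - \<phi> y" x] assms by (simp add: diff continuous_on_diff)

lemma le_const: "continuous_on UNIV \<phi> \<Longrightarrow> (\<And>y. \<phi> y \<le> a) \<Longrightarrow> P \<phi> x \<le> a"
  using mono[of \<phi> "\<lambda>_. a"] by (simp add: const)

lemma const_le: "continuous_on UNIV \<phi> \<Longrightarrow> (\<And>y. a \<le> \<phi> y) \<Longrightarrow> a \<le> P \<phi> x"
  using mono[of "\<lambda>_. a" \<phi>] by (simp add: const)

lemma abs_le:
  assumes "continuous_on UNIV \<phi>" and "\<And>y. \<bar>\<phi> y\<bar> \<le> e"
  shows "\<bar>P \<phi> x\<bar> \<le> e"
proof -
  have "- e \<le> \<phi> y" "\<phi> y \<le> e" for y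
    using assms(2)[of y] by linarith+
  then have "- e \<le> P \<phi> x" and "P \<phi> x \<le> e"
    by (simp_all add: const_le le_const assms(1))
  then show ?thesis by linarith
qed

end

lemma markov_operator_comp:
  assumes "markov_operator P" and "markov_operator Q"
  shows "markov_operator (\<lambda>\<phi>. P (Q \<phi>))"
proof -
  interpret P: markov_operator P by fact
  interpret Q: markov_operator Q by fact
  show ?thesis
    by unfold_locales
      (simp_all add: P.continuous Q.continuous P.linear Q.linear P.positive Q.positive
        P.unital Q.unital)
qed

locale contracting_markov_operator = markov_operator P
  for P :: "('a::metric_space \<Rightarrow> real) \<Rightarrow> 'a \<Rightarrow> real" +
  fixes \<kappa> :: real
  assumes compact_UNIV: "compact (UNIV :: 'a set)"
    and osc_contraction: "continuous_on UNIV \<phi> \<Longrightarrow> osc_le \<phi> D \<Longrightarrow> osc_le (P \<phi>) (\<kappa> * D)"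
    and contraction_nonneg: "0 \<le> \<kappa>" and contraction_less_1: "\<kappa> < 1"

lemma contracting_markov_operator_comp:
  assumes "contracting_markov_operator P \<kappa>" and "contracting_markov_operator Q \<kappa>'"
  shows "contracting_markov_operator (\<lambda>\<phi>. P (Q \<phi>)) (\<kappa> * \<kappa>')"
proof -
  interpret P: contracting_markov_operator P \<kappa> by fact
  interpret Q: contracting_markov_operator Q \<kappa>' by fact
  have "markov_operator (\<lambda>\<phi>. P (Q \<phi>))"
    by (rule markov_operator_comp) unfold_locales
  moreover have "\<kappa> * \<kappa>' < 1"
    using P.contraction_nonneg P.contraction_less_1 Q.contraction_nonneg Q.contraction_less_1
    by (smt (verit) mult_left_le_one_le)
  ultimately show ?thesis
    by unfold_locales
      (auto simp: P.compact_UNIV P.osc_contraction Q.osc_contraction Q.continuous mult.assoc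
        P.contraction_nonneg Q.contraction_nonneg markov_operator_def)
qed

lemma quot_norm_le_sup_norm:
  fixes h :: "'a::metric_space \<Rightarrow> real"
  assumes cpt: "compact (UNIV :: 'a set)" and h: "continuous_on UNIV h"
  shows "quot_norm h \<le> sup_norm (\<lambda>x. h x - l)"
  unfolding quot_norm_def
proof (rule cINF_lower)
  show "bdd_below (range (\<lambda>l. sup_norm (\<lambda>x. h x - l)))"
  proof (rule bdd_belowI2)
    fix l
    have "\<bar>h x - l\<bar> \<le> sup_norm (\<lambda>x. h x - l)" for x
      by (rule abs_le_sup_norm[OF cpt continuous_on_diff[OF h continuous_on_const]])
    then show "0 \<le> sup_norm (\<lambda>x. h x - l)"
      by (meson abs_ge_zero order_trans)
  qed
qed simp

context contracting_markov_operator
begin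

lemma quot_norm_id_minus_le:
  assumes \<phi>: "continuous_on UNIV \<phi>"
  shows "quot_norm (\<lambda>x. \<phi> x - P \<phi> x) \<le> 2 * quot_norm \<phi>"
proof -
  have bound2: "quot_norm (\<lambda>x. \<phi> x - P \<phi> x) \<le> 2 * sup_norm (\<lambda>x. \<phi> x - l)" for l
  proof -
    have \<phi>l: "continuous_on UNIV (\<lambda>x. \<phi> x - l)" by (intro continuous_intros \<phi>)
    have bound: "\<bar>\<phi> y - l\<bar> \<le> sup_norm (\<lambda>x. \<phi> x - l)" for y
      by (rule abs_le_sup_norm[OF compact_UNIV \<phi>l])
    have "quot_norm (\<lambda>x. \<phi> x - P \<phi> x) \<le> sup_norm (\<lambda>x. \<phi> x - P \<phi> x - 0)"
      by (intro quot_norm_le_sup_norm compact_UNIV continuous_intros \<phi> continuous)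
    also have "\<dots> \<le> 2 * sup_norm (\<lambda>x. \<phi> x - l)"
    proof (rule sup_norm_le)
      fix x
      have "\<phi> x - P \<phi> x = (\<phi> x - l) - P (\<lambda>y. \<phi> y - l) x"
        using add_const[OF \<phi>, of "- l" x] by simp
      moreover have "\<bar>P (\<lambda>y. \<phi> y - l) x\<bar> \<le> sup_norm (\<lambda>x. \<phi> x - l)"
        by (rule abs_le[OF \<phi>l bound])
      ultimately show "\<bar>\<phi> x - P \<phi> x - 0\<bar> \<le> 2 * sup_norm (\<lambda>x. \<phi> x - l)"
        using bound[of x] by linarith
    qed
    finally show ?thesis .
  qed
  have "quot_norm (\<lambda>x. \<phi> x - P \<phi> x) / 2 \<le> sup_norm (\<lambda>x. \<phi> x - l)" for l
    using bound2[of l] by linarith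
  then have "quot_norm (\<lambda>x. \<phi> x - P \<phi> x) / 2 \<le> quot_norm \<phi>"
    unfolding quot_norm_def[of \<phi>] by (rule cINF_greatest[OF UNIV_not_empty])
  then show ?thesis by linarith
qed

lemma id_minus_inj_mod_const:
  assumes \<phi>: "continuous_on UNIV \<phi>" and \<psi>: "continuous_on UNIV \<psi>"
    and eq: "\<And>x. \<phi> x - P \<phi> x = \<psi> x - P \<psi> x + k"
  shows "\<exists>c. \<forall>x. \<phi> x = \<psi> x + c"
proof -
  define h where "h x = \<phi> x - \<psi> x" for x
  have h: "continuous_on UNIV h" unfolding h_def by (intro continuous_intros \<phi> \<psi>)
  have h_fix: "h x = P h x + k" for x
    using eq[of x] diff[OF \<phi> \<psi>, of x] by (simp add: h_def[abs_def])
  have "h x = h undefined" for x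
  proof (rule constant_if_osc_contracting[OF compact_UNIV h contraction_less_1])
    fix D assume "osc_le h D"
    then have "osc_le (P h) (\<kappa> * D)" by (rule osc_contraction[OF h])
    then show "osc_le h (\<kappa> * D)"
      unfolding osc_le_def by (metis h_fix add_diff_cancel_right)
  qed
  then have "\<phi> x = \<psi> x + h undefined" for x
    using h_def by (metis add.commute diff_add_cancel)
  then show ?thesis by blast
qed

lemma id_minus_surj_mod_const:
  assumes \<psi>: "continuous_on UNIV \<psi>"
  shows "\<exists>\<phi>. continuous_on UNIV \<phi> \<and> (\<exists>k. \<forall>x. \<phi> x - P \<phi> x = \<psi> x + k)"
proof -
  define F where "F \<phi> x = \<psi> x + P \<phi> x" for \<phi> x
  have F_diff: "F f x - F g x = P (\<lambda>y. f y - g y) x"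
    if "continuous_on UNIV f" "continuous_on UNIV g" for f g x
    using diff[OF that] by (simp add: F_def)
  have "\<exists>\<phi> k. continuous_on UNIV \<phi> \<and> (\<forall>x. F \<phi> x = \<phi> x + k)"
  proof (rule osc_contraction_fixpoint_mod_const[OF compact_UNIV _ _ _ contraction_nonneg
        contraction_less_1])
    show "continuous_on UNIV (F f)" if "continuous_on UNIV f" for f
      unfolding F_def by (intro continuous_intros \<psi> continuous that)
    show "osc_le (\<lambda>x. F f x - F g x) (\<kappa> * D)"
      if "continuous_on UNIV f" "continuous_on UNIV g" "osc_le (\<lambda>x. f x - g x) D" for f g D
      using osc_contraction[OF continuous_on_diff[OF that(1,2)] that(3)]
      by (simp add: F_diff[OF that(1,2)])
    show "\<bar>F f x - F g x\<bar> \<le> e"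
      if "continuous_on UNIV f" "continuous_on UNIV g" "\<And>x. \<bar>f x - g x\<bar> \<le> e" for f g e x
      unfolding F_diff[OF that(1,2)] by (rule abs_le[OF continuous_on_diff[OF that(1,2)] that(3)])
  qed blast
  then obtain \<phi> k where "continuous_on UNIV \<phi>" and "\<And>x. \<psi> x + P \<phi> x = \<phi> x + k"
    unfolding F_def by blast
  then show ?thesis
    by (intro exI[of _ \<phi>] conjI exI[of _ "- k"]) (auto simp: algebra_simps)
qed

lemma id_minus_bij_mod_const:
  "(\<forall>\<phi>. continuous_on UNIV \<phi> \<longrightarrow> continuous_on UNIV (\<lambda>x. \<phi> x - P \<phi> x))
   \<and> (\<forall>\<phi> \<psi> a b. continuous_on UNIV \<phi> \<longrightarrow> continuous_on UNIV \<psi> \<longrightarrow>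
        (\<lambda>x. a * \<phi> x + b * \<psi> x - P (\<lambda>x. a * \<phi> x + b * \<psi> x) x)
          = (\<lambda>x. a * (\<phi> x - P \<phi> x) + b * (\<psi> x - P \<psi> x)))
   \<and> (\<forall>\<phi> l. continuous_on UNIV \<phi> \<longrightarrow>
        (\<exists>k. \<forall>x. \<phi> x + l - P (\<lambda>y. \<phi> y + l) x = \<phi> x - P \<phi> x + k))
   \<and> (\<exists>C. \<forall>\<phi>. continuous_on UNIV \<phi> \<longrightarrow> quot_norm (\<lambda>x. \<phi> x - P \<phi> x) \<le> C * quot_norm \<phi>)
   \<and> (\<forall>\<phi> \<psi>. continuous_on UNIV \<phi> \<longrightarrow> continuous_on UNIV \<psi> \<longrightarrow>
        (\<exists>k. \<forall>x. \<phi> x - P \<phi> x = \<psi> x - P \<psi> x + k) \<longrightarrow> (\<exists>k. \<forall>x. \<phi> x = \<psi> x + k))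
   \<and> (\<forall>\<psi>. continuous_on UNIV \<psi> \<longrightarrow>
        (\<exists>\<phi>. continuous_on UNIV \<phi> \<and> (\<exists>k. \<forall>x. \<phi> x - P \<phi> x = \<psi> x + k)))"
proof (intro conjI allI impI)
  show "continuous_on UNIV (\<lambda>x. \<phi> x - P \<phi> x)" if "continuous_on UNIV \<phi>" for \<phi>
    by (intro continuous_intros continuous that)
  show "(\<lambda>x. a * \<phi> x + b * \<psi> x - P (\<lambda>x. a * \<phi> x + b * \<psi> x) x)
      = (\<lambda>x. a * (\<phi> x - P \<phi> x) + b * (\<psi> x - P \<psi> x))"
    if "continuous_on UNIV \<phi>" "continuous_on UNIV \<psi>" for \<phi> \<psi> a b
    by (simp add: linear[OF that] algebra_simps)
  show "\<exists>k. \<forall>x. \<phi> x + l - P (\<lambda>y. \<phi> y + l) x = \<phi> x - P \<phi> x + k"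
    if "continuous_on UNIV \<phi>" for \<phi> l
    by (simp add: add_const[OF that])
  show "\<exists>C. \<forall>\<phi>. continuous_on UNIV \<phi> \<longrightarrow> quot_norm (\<lambda>x. \<phi> x - P \<phi> x) \<le> C * quot_norm \<phi>"
    using quot_norm_id_minus_le by blast
  show "\<exists>k. \<forall>x. \<phi> x = \<psi> x + k"
    if "continuous_on UNIV \<phi>" "continuous_on UNIV \<psi>" "\<exists>k. \<forall>x. \<phi> x - P \<phi> x = \<psi> x - P \<psi> x + k"
    for \<phi> \<psi>
    using that id_minus_inj_mod_const by blast
  show "\<exists>\<phi>. continuous_on UNIV \<phi> \<and> (\<exists>k. \<forall>x. \<phi> x - P \<phi> x = \<psi> x + k)"
    if "continuous_on UNIV \<psi>" for \<psi>
    by (rule id_minus_surj_mod_const[OF that])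
qed

end

section \<open>Integral operators with a Doeblin minorisation\<close>

definition kernel_op :: "'a measure \<Rightarrow> ('a \<Rightarrow> 'a \<Rightarrow> real) \<Rightarrow> ('a \<Rightarrow> real) \<Rightarrow> 'a \<Rightarrow> real" where
  "kernel_op M q \<phi> x = (\<integral>y. q x y * \<phi> y \<partial>M)"

locale doeblin_kernel = compact_borel_prob M for M :: "'a::metric_space measure" +
  fixes q :: "'a \<Rightarrow> 'a \<Rightarrow> real" and \<theta> :: real
  assumes kernel_continuous: "continuous_on UNIV (\<lambda>p. q (fst p) (snd p))"
    and kernel_nonneg: "\<And>x y. 0 \<le> q x y"
    and kernel_normalized: "\<And>x. (\<integral>y. q x y \<partial>M) = 1"
    and doeblin_minorization: "\<And>x x' y. \<theta> * q x' y \<le> q x y"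
    and doeblin_pos: "0 < \<theta>"
begin

lemma continuous_on_kernel_mult:
  "continuous_on UNIV \<phi> \<Longrightarrow> continuous_on UNIV (\<lambda>y. q x y * \<phi> y)"
  by (intro continuous_intros continuous_on_prod_sections(1)[OF kernel_continuous])

lemma continuous_on_kernel_op:
  assumes \<phi>: "continuous_on UNIV \<phi>"
  shows "continuous_on UNIV (kernel_op M q \<phi>)"
proof -
  have "continuous_on UNIV (\<lambda>p. q (fst p) (snd p) * \<phi> (snd p))"
    by (intro continuous_intros kernel_continuous continuous_on_comp_snd[OF \<phi>])
  then show ?thesis
    unfolding kernel_op_def[abs_def]
    by (rule continuous_on_parametric_integral[OF compact_UNIV, of "\<lambda>x y. q x y * \<phi> y", simplified])
qed

sublocale K: markov_operator "kernel_op M q"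
proof
  show "continuous_on UNIV (kernel_op M q \<phi>)" if "continuous_on UNIV \<phi>" for \<phi>
    using that by (rule continuous_on_kernel_op)
  show "kernel_op M q (\<lambda>y. a * \<phi> y + b * \<psi> y) = (\<lambda>x. a * kernel_op M q \<phi> x + b * kernel_op M q \<psi> x)"
    if "continuous_on UNIV \<phi>" "continuous_on UNIV \<psi>" for \<phi> \<psi> a b
  proof
    fix x
    have "kernel_op M q (\<lambda>y. a * \<phi> y + b * \<psi> y) x
        = (\<integral>y. a * (q x y * \<phi> y) + b * (q x y * \<psi> y) \<partial>M)"
      unfolding kernel_op_def by (simp add: algebra_simps)
    also have "\<dots> = a * kernel_op M q \<phi> x + b * kernel_op M q \<psi> x"
      unfolding kernel_op_def
      by (simp add: integrable_continuous continuous_on_kernel_mult that continuous_intros)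
    finally show "kernel_op M q (\<lambda>y. a * \<phi> y + b * \<psi> y) x = a * kernel_op M q \<phi> x + b * kernel_op M q \<psi> x" .
  qed
  show "0 \<le> kernel_op M q \<phi> x" if "\<And>y. 0 \<le> \<phi> y" for \<phi> x
    unfolding kernel_op_def using that kernel_nonneg by (simp add: integral_nonneg)
  show "kernel_op M q (\<lambda>_. 1) = (\<lambda>_. 1)"
    by (simp add: kernel_op_def[abs_def] kernel_normalized)
qed

lemma kernel_op_doeblin:
  assumes \<phi>: "continuous_on UNIV \<phi>" and nonneg: "\<And>y. 0 \<le> \<phi> y"
  shows "\<theta> * kernel_op M q \<phi> x' \<le> kernel_op M q \<phi> x"
proof -
  have "(\<integral>y. \<theta> * (q x' y * \<phi> y) \<partial>M) \<le> (\<integral>y. q x y * \<phi> y \<partial>M)"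
    using doeblin_minorization nonneg
    by (intro integral_mono_continuous continuous_intros continuous_on_kernel_mult \<phi>)
      (simp add: mult_right_mono flip: mult.assoc)
  then show ?thesis by (simp add: kernel_op_def)
qed

lemma doeblin_le_1: "\<theta> \<le> 1"
  using kernel_op_doeblin[of "\<lambda>_. 1"] by (simp add: K.unital)

lemma kernel_op_osc:
  assumes \<phi>: "continuous_on UNIV \<phi>" and osc: "osc_le \<phi> D"
  shows "osc_le (kernel_op M q \<phi>) ((1 - \<theta>) * D)"
  unfolding osc_le_def
proof (intro allI)
  fix x x'
  obtain ymin where ymin: "\<And>y. \<phi> ymin \<le> \<phi> y"
    using continuous_attains_inf[OF compact_UNIV _ \<phi>] by auto
  define m where "m = \<phi> ymin"
  let ?K = "kernel_op M q"
  have "0 \<le> m + D - \<phi> y" for y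
    using osc unfolding osc_le_def m_def by (smt (verit))
  then have "\<theta> * ?K (\<lambda>y. m + D - \<phi> y) x' \<le> ?K (\<lambda>y. m + D - \<phi> y) x"
    by (intro kernel_op_doeblin continuous_intros \<phi>)
  moreover have "?K (\<lambda>y. m + D - \<phi> y) z = m + D - ?K \<phi> z" for z
    using K.diff[OF continuous_on_const \<phi>, of "m + D" z] by (simp add: K.const)
  ultimately have doeblin: "\<theta> * (m + D - ?K \<phi> x') \<le> m + D - ?K \<phi> x"
    by simp
  have "?K \<phi> x - ?K \<phi> x' \<le> (m + D - ?K \<phi> x') - \<theta> * (m + D - ?K \<phi> x')"
    using doeblin by linarith
  also have "\<dots> = (1 - \<theta>) * (m + D - ?K \<phi> x')"
    by (simp add: algebra_simps)
  also have "\<dots> \<le> (1 - \<theta>) * D"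
  proof (rule mult_left_mono)
    show "m + D - ?K \<phi> x' \<le> D"
      using ymin by (simp add: m_def K.const_le \<phi>)
  qed (use doeblin_le_1 in simp)
  finally show "?K \<phi> x - ?K \<phi> x' \<le> (1 - \<theta>) * D" .
qed

lemma contracting_markov_operator_kernel_op: "contracting_markov_operator (kernel_op M q) (1 - \<theta>)"
  using K.markov_operator_axioms compact_UNIV kernel_op_osc doeblin_le_1 doeblin_pos
  by (simp add: contracting_markov_operator_def contracting_markov_operator_axioms_def)

end

lemma ln_diff_le_of_convex_mix:
  fixes \<theta> L v w :: real
  assumes \<theta>: "0 \<le> \<theta>" "\<theta> \<le> 1" and v: "1 \<le> v" "v \<le> exp L" and w: "\<theta> * v + 1 - \<theta> \<le> w"
  shows "ln v - ln w \<le> (1 - \<theta>) * L"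
proof -
  have L: "0 \<le> L" using order_trans[OF v] by simp
  define \<rho> where "\<rho> = exp ((1 - \<theta>) * L)"
  have \<rho>: "1 \<le> \<rho>" unfolding \<rho>_def using L \<theta> by simp
  have "exp ((1 - \<theta>) *\<^sub>R 0 + \<theta> *\<^sub>R L) \<le> (1 - \<theta>) * exp 0 + \<theta> * exp L"
    by (rule convex_onD[OF exp_convex]) (use \<theta> in auto)
  then have "\<rho> * exp (\<theta> * L) \<le> \<rho> * (\<theta> * exp L + 1 - \<theta>)"
    using \<rho> by (intro mult_left_mono) auto
  moreover have "exp L = \<rho> * exp (\<theta> * L)"
    unfolding \<rho>_def by (simp add: exp_add[symmetric] algebra_simps)
  ultimately have at_top: "exp L \<le> \<rho> * (\<theta> * exp L + 1 - \<theta>)" by simp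
  \<comment> \<open>\<open>v \<le> \<rho> * (\<theta> * v + 1 - \<theta>)\<close> is linear in \<open>v\<close>, and holds at both ends \<open>v = 1\<close> and \<open>v = exp L\<close>\<close>
  have "v * (1 - \<rho> * \<theta>) \<le> \<rho> * (1 - \<theta>)"
  proof (cases "0 \<le> 1 - \<rho> * \<theta>")
    case True
    have "v * (1 - \<rho> * \<theta>) \<le> exp L * (1 - \<rho> * \<theta>)" by (rule mult_right_mono[OF v(2) True])
    also have "\<dots> \<le> \<rho> * (1 - \<theta>)" using at_top by (simp add: algebra_simps)
    finally show ?thesis .
  next
    case False
    have "v * (1 - \<rho> * \<theta>) \<le> 1 * (1 - \<rho> * \<theta>)" using False v(1) by (intro mult_right_mono_neg) auto
    also have "\<dots> \<le> \<rho> * (1 - \<theta>)" using \<rho> \<theta> by (simp add: algebra_simps)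
    finally show ?thesis .
  qed
  then have "v \<le> \<rho> * (\<theta> * v + 1 - \<theta>)" by (simp add: algebra_simps)
  also have "\<dots> \<le> \<rho> * w" using w \<rho> by simp
  finally have "ln v \<le> ln (\<rho> * w)" using v by simp
  also have "\<dots> = (1 - \<theta>) * L + ln w"
  proof -
    have "\<theta> * 1 \<le> \<theta> * v" using \<theta> v by (intro mult_left_mono)
    then have "0 < w" using w by linarith
    then show ?thesis by (simp add: \<rho>_def ln_mult)
  qed
  finally show ?thesis by simp
qed

context doeblin_kernel
begin

lemma ln_kernel_op_osc:
  assumes u: "continuous_on UNIV u" and "0 < m"
    and lower: "\<And>y. m \<le> u y" and upper: "\<And>y. u y \<le> exp L * m"
  shows "ln (kernel_op M q u x') - ln (kernel_op M q u x) \<le> (1 - \<theta>) * L"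
proof -
  let ?K = "kernel_op M q"
  have bounds: "m \<le> ?K u z" "?K u z \<le> exp L * m" for z
    by (intro K.const_le K.le_const u lower upper)+
  have "\<theta> * ?K (\<lambda>y. u y + - m) x' \<le> ?K (\<lambda>y. u y + - m) x"
    using lower by (intro kernel_op_doeblin continuous_intros u) simp
  then have doeblin: "\<theta> * (?K u x' - m) \<le> ?K u x - m"
    using K.add_const[OF u, of "- m" x] K.add_const[OF u, of "- m" x'] by simp
  have "\<theta> * (?K u x' / m) + 1 - \<theta> = (\<theta> * (?K u x' - m) + m) / m"
    using \<open>0 < m\<close> by (simp add: field_simps)
  also have "\<dots> \<le> (?K u x - m + m) / m"
    using doeblin \<open>0 < m\<close> by (intro divide_right_mono) auto
  finally have mix: "\<theta> * (?K u x' / m) + 1 - \<theta> \<le> ?K u x / m" by simp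
  have "ln (?K u x' / m) - ln (?K u x / m) \<le> (1 - \<theta>) * L"
    using bounds \<open>0 < m\<close> doeblin_pos doeblin_le_1
    by (intro ln_diff_le_of_convex_mix[OF _ _ _ _ mix]) (auto simp: field_simps)
  moreover have "?K u z \<noteq> 0" for z using bounds(1)[of z] \<open>0 < m\<close> by linarith
  ultimately show ?thesis using \<open>0 < m\<close> by (simp add: ln_div)
qed

end

section \<open>The soft c-transform\<close>

text \<open>For \<open>f = f\<^sub>\<nu>\<^sub>,\<^sub>\<mu>\<close> and \<open>M = \<nu>\<close>, \<open>gibbs_kernel eps c \<nu> f\<close> is the kernel
  \<open>k\<^sub>\<mu>\<^sub>,\<^sub>\<nu>\<close>, because \<open>f\<^sub>\<mu>\<^sub>,\<^sub>\<nu> = T(f\<^sub>\<nu>\<^sub>,\<^sub>\<mu>, \<nu>)\<close>.\<close>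

definition gibbs_kernel :: "real \<Rightarrow> ('a \<Rightarrow> 'a \<Rightarrow> real) \<Rightarrow> 'a measure \<Rightarrow> ('a \<Rightarrow> real) \<Rightarrow> 'a \<Rightarrow> 'a \<Rightarrow> real"
  where "gibbs_kernel eps c M f y x = exp ((T_eps eps c f M y + f x - c y x) / eps)"

locale soft_ctransform = compact_borel_prob M for M :: "'a::metric_space measure" +
  fixes eps :: real and c :: "'a \<Rightarrow> 'a \<Rightarrow> real"
  assumes eps_pos: "0 < eps"
    and cost_continuous: "continuous_on UNIV (\<lambda>(x, y). c x y)"
    and cost_sym: "\<And>x y. c x y = c y x"
    and cost_nonneg: "\<And>x y. 0 \<le> c x y"
begin

lemma cost_continuous_on_pairs: "continuous_on UNIV (\<lambda>p. c (fst p) (snd p))"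
  using cost_continuous by (simp add: case_prod_beta')

lemma cost_bounded: obtains C where "\<And>x y. c x y \<le> C"
proof -
  obtain C where "\<And>p. \<bar>c (fst p) (snd p)\<bar> \<le> C"
    using continuous_on_compact_UNIV_bounded[OF compact_Times[OF compact_UNIV compact_UNIV, simplified]
        cost_continuous_on_pairs] by auto
  then have "c x y \<le> C" for x y
    using abs_le_D1[of "c x y" C] by force
  then show ?thesis by (rule that)
qed

lemma continuous_on_gibbs_weight:
  "continuous_on UNIV f \<Longrightarrow> continuous_on UNIV (\<lambda>x. exp ((f x - c x y) / eps))"
  using eps_pos
  by (intro continuous_intros continuous_on_prod_sections(2)[OF cost_continuous_on_pairs]) auto

lemma exp_neg_T_eps:
  fixes f :: "'a \<Rightarrow> real"
  assumes f: "continuous_on UNIV f"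
  shows "exp (- T_eps eps c f M y / eps) = (\<integral>x. exp ((f x - c x y) / eps) \<partial>M)"
proof -
  have "0 < (\<integral>x. exp ((f x - c x y) / eps) \<partial>M)"
    by (intro integral_pos_continuous continuous_on_gibbs_weight f) simp
  then show ?thesis using eps_pos by (simp add: T_eps_def)
qed

lemma continuous_on_T_eps:
  fixes f :: "'a \<Rightarrow> real"
  assumes f: "continuous_on UNIV f"
  shows "continuous_on UNIV (T_eps eps c f M)"
proof -
  have "continuous_on UNIV (\<lambda>p. exp ((f (snd p) - c (snd p) (fst p)) / eps))"
    by (intro continuous_intros continuous_on_comp_snd[OF f]
        continuous_on_prod_swap[OF cost_continuous_on_pairs]) (use eps_pos in simp)
  then have "continuous_on UNIV (\<lambda>y. \<integral>x. exp ((f x - c x y) / eps) \<partial>M)"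
    by (rule continuous_on_parametric_integral[OF compact_UNIV,
          of "\<lambda>y x. exp ((f x - c x y) / eps)", simplified])
  moreover have "(\<integral>x. exp ((f x - c x y) / eps) \<partial>M) \<noteq> 0" for y
    using integral_pos_continuous[OF continuous_on_gibbs_weight[OF f], of y] by simp
  ultimately show ?thesis
    unfolding T_eps_def[abs_def] by (intro continuous_on_mult_left continuous_on_ln) auto
qed

lemma T_eps_le_shift:
  fixes f g :: "'a \<Rightarrow> real"
  assumes f: "continuous_on UNIV f" and g: "continuous_on UNIV g"
    and le: "\<And>x. f x - c x y \<le> g x - c x y' + a"
  shows "T_eps eps c g M y' \<le> T_eps eps c f M y + a"
proof -
  have "exp (- T_eps eps c f M y / eps) \<le> (\<integral>x. exp (a / eps) * exp ((g x - c x y') / eps) \<partial>M)"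
    unfolding exp_neg_T_eps[OF f]
  proof (rule integral_mono_continuous[OF continuous_on_gibbs_weight[OF f]
        continuous_on_mult[OF continuous_on_const continuous_on_gibbs_weight[OF g]]])
    fix x
    have "(f x - c x y) / eps \<le> a / eps + (g x - c x y') / eps"
      using le[of x] eps_pos by (simp add: divide_right_mono flip: add_divide_distrib)
    then show "exp ((f x - c x y) / eps) \<le> exp (a / eps) * exp ((g x - c x y') / eps)"
      by (simp flip: exp_add)
  qed
  also have "\<dots> = exp (a / eps) * exp (- T_eps eps c g M y' / eps)"
    by (simp only: integral_mult_right_zero exp_neg_T_eps[OF g])
  finally have "- T_eps eps c f M y / eps \<le> a / eps + - T_eps eps c g M y' / eps"
    by (simp flip: exp_add)
  then show ?thesis
    using eps_pos by (simp add: field_simps)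
qed

lemma T_eps_nonexpansive:
  fixes f g :: "'a \<Rightarrow> real"
  assumes f: "continuous_on UNIV f" and g: "continuous_on UNIV g" and le: "\<And>x. \<bar>f x - g x\<bar> \<le> e"
  shows "\<bar>T_eps eps c f M y - T_eps eps c g M y\<bar> \<le> e"
proof -
  have "f x - g x \<le> e" "g x - f x \<le> e" for x
    using le[of x] by linarith+
  then have "T_eps eps c g M y \<le> T_eps eps c f M y + e" "T_eps eps c f M y \<le> T_eps eps c g M y + e"
    by (intro T_eps_le_shift f g; simp add: algebra_simps)+
  then show ?thesis by linarith
qed

lemma T_eps_add_const:
  fixes f :: "'a \<Rightarrow> real"
  assumes f: "continuous_on UNIV f"
  shows "T_eps eps c (\<lambda>x. f x + k) M y = T_eps eps c f M y - k"
proof -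
  have fk: "continuous_on UNIV (\<lambda>x. f x + k)" by (intro continuous_intros f)
  have "T_eps eps c f M y \<le> T_eps eps c (\<lambda>x. f x + k) M y + k"
    by (rule T_eps_le_shift[OF fk f]) simp
  moreover have "T_eps eps c (\<lambda>x. f x + k) M y \<le> T_eps eps c f M y + - k"
    by (rule T_eps_le_shift[OF f fk]) simp
  ultimately show ?thesis by linarith
qed

lemma gibbs_kernel_eq:
  "gibbs_kernel eps c M f y x = exp (T_eps eps c f M y / eps) * exp ((f x - c x y) / eps)"
  unfolding gibbs_kernel_def cost_sym[of y x] by (simp add: add_divide_distrib diff_divide_distrib flip: exp_add)

lemma integral_gibbs_kernel:
  fixes f :: "'a \<Rightarrow> real"
  assumes f: "continuous_on UNIV f"
  shows "(\<integral>x. gibbs_kernel eps c M f y x \<partial>M) = 1"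
proof -
  have "(\<integral>x. gibbs_kernel eps c M f y x \<partial>M)
      = exp (T_eps eps c f M y / eps) * (\<integral>x. exp ((f x - c x y) / eps) \<partial>M)"
    by (simp add: gibbs_kernel_eq)
  also have "\<dots> = 1"
    by (simp add: exp_neg_T_eps[OF f, symmetric] flip: exp_add)
  finally show ?thesis .
qed

lemma doeblin_gibbs_kernel:
  fixes f :: "'a \<Rightarrow> real"
  assumes f: "continuous_on UNIV f" and C: "\<And>x y. c x y \<le> C"
  shows "doeblin_kernel M (gibbs_kernel eps c M f) (exp (- 2 * C / eps))"
proof unfold_locales
  show "continuous_on UNIV (\<lambda>p. gibbs_kernel eps c M f (fst p) (snd p))"
    unfolding gibbs_kernel_def using eps_pos
    by (intro continuous_intros continuous_on_comp_fst[OF continuous_on_T_eps[OF f]]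
        continuous_on_comp_snd[OF f] cost_continuous_on_pairs) simp
  show "0 \<le> gibbs_kernel eps c M f x y" for x y
    by (simp add: gibbs_kernel_def)
  show "(\<integral>x. gibbs_kernel eps c M f y x \<partial>M) = 1" for y
    by (rule integral_gibbs_kernel[OF f])
  show "exp (- 2 * C / eps) * gibbs_kernel eps c M f y' x \<le> gibbs_kernel eps c M f y x" for y y' x
  proof -
    have "T_eps eps c f M y' \<le> T_eps eps c f M y + C"
      using C cost_nonneg by (intro T_eps_le_shift[OF f f]) (smt (verit))
    then have "- 2 * C + (T_eps eps c f M y' + f x - c y' x) \<le> T_eps eps c f M y + f x - c y x"
      using C[of y x] cost_nonneg[of y' x] by linarith
    then have "(- 2 * C + (T_eps eps c f M y' + f x - c y' x)) / eps
        \<le> (T_eps eps c f M y + f x - c y x) / eps"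
      using eps_pos by (simp add: divide_right_mono)
    then show ?thesis
      by (simp add: gibbs_kernel_def add_divide_distrib diff_divide_distrib flip: exp_add)
  qed
  show "0 < exp (- 2 * C / eps)" by simp
qed

end

context soft_ctransform
begin

lemma T_eps_diff_eq:
  fixes f g :: "'a \<Rightarrow> real"
  assumes f: "continuous_on UNIV f" and g: "continuous_on UNIV g"
  shows "T_eps eps c f M y - T_eps eps c g M y
    = - eps * ln (kernel_op M (gibbs_kernel eps c M g) (\<lambda>x. exp ((f x - g x) / eps)) y)"
proof -
  have "exp ((g x - c x y) / eps) * exp ((f x - g x) / eps) = exp ((f x - c x y) / eps)" for x
    by (simp add: diff_divide_distrib flip: exp_add)
  then have "kernel_op M (gibbs_kernel eps c M g) (\<lambda>x. exp ((f x - g x) / eps)) y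
      = exp (T_eps eps c g M y / eps) * (\<integral>x. exp ((f x - c x y) / eps) \<partial>M)"
    by (simp add: kernel_op_def gibbs_kernel_eq mult.assoc)
  also have "\<dots> = exp (T_eps eps c g M y / eps) * exp (- T_eps eps c f M y / eps)"
    by (simp only: exp_neg_T_eps[OF f])
  also have "\<dots> = exp ((T_eps eps c g M y - T_eps eps c f M y) / eps)"
    by (simp add: diff_divide_distrib flip: exp_add)
  finally show ?thesis
    using eps_pos by simp
qed

lemma T_eps_osc_contraction:
  fixes f g :: "'a \<Rightarrow> real"
  assumes f: "continuous_on UNIV f" and g: "continuous_on UNIV g"
    and C: "\<And>x y. c x y \<le> C" and osc: "osc_le (\<lambda>x. f x - g x) D"
  shows "osc_le (\<lambda>y. T_eps eps c f M y - T_eps eps c g M y) ((1 - exp (- 2 * C / eps)) * D)"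
proof -
  interpret G: doeblin_kernel M "gibbs_kernel eps c M g" "exp (- 2 * C / eps)"
    by (rule doeblin_gibbs_kernel[OF g C])
  define u where "u x = exp ((f x - g x) / eps)" for x
  have u: "continuous_on UNIV u"
    unfolding u_def using eps_pos by (intro continuous_intros f g) simp
  obtain xmin where xmin: "\<And>x. f xmin - g xmin \<le> f x - g x"
    using continuous_attains_inf[OF compact_UNIV _ continuous_on_diff[OF f g]] by auto
  have lower: "u xmin \<le> u x" for x
    unfolding u_def using xmin[of x] eps_pos by (simp add: divide_right_mono)
  have upper: "u x \<le> exp (D / eps) * u xmin" for x
  proof -
    have "f x - g x \<le> D + (f xmin - g xmin)"
      using osc[unfolded osc_le_def, rule_format, of x xmin] by linarith
    then have "(f x - g x) / eps \<le> D / eps + (f xmin - g xmin) / eps"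
      using eps_pos by (simp add: divide_right_mono flip: add_divide_distrib)
    then show ?thesis unfolding u_def by (simp flip: exp_add)
  qed
  show ?thesis
    unfolding osc_le_def
  proof (intro allI)
    fix y y'
    have "ln (kernel_op M (gibbs_kernel eps c M g) u y') - ln (kernel_op M (gibbs_kernel eps c M g) u y)
        \<le> (1 - exp (- 2 * C / eps)) * (D / eps)"
      by (rule G.ln_kernel_op_osc[OF u _ lower upper]) (simp add: u_def)
    then show "T_eps eps c f M y - T_eps eps c g M y - (T_eps eps c f M y' - T_eps eps c g M y')
        \<le> (1 - exp (- 2 * C / eps)) * D"
      using eps_pos unfolding T_eps_diff_eq[OF f g] u_def[symmetric]
      by (simp add: field_simps)
  qed
qed

end

context soft_ctransform
begin

lemma doeblin_constant_le_1:
  assumes C: "\<And>x y. c x y \<le> C"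
  shows "exp (- 2 * C / eps) \<le> 1"
proof -
  have "0 \<le> C" using cost_nonneg C by (rule order_trans)
  then show ?thesis using eps_pos by (simp add: divide_nonpos_pos)
qed

end

section \<open>Schroedinger potentials\<close>

definition schr_system :: "real \<Rightarrow> ('a::topological_space \<Rightarrow> 'a \<Rightarrow> real) \<Rightarrow> 'a measure \<Rightarrow> 'a measure
    \<Rightarrow> ('a \<Rightarrow> real) \<Rightarrow> ('a \<Rightarrow> real) \<Rightarrow> bool" where
  "schr_system eps c \<mu> \<nu> f g \<longleftrightarrow> continuous_on UNIV f \<and> continuous_on UNIV g \<and>
     f = T_eps eps c g \<nu> \<and> g = T_eps eps c f \<mu> \<and> (\<integral>x. f x \<partial>\<mu>) = (\<integral>x. g x \<partial>\<nu>)"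

lemma schr_pair_eq_The: "schr_pair eps c \<mu> \<nu> = (THE p. schr_system eps c \<mu> \<nu> (fst p) (snd p))"
  by (simp add: schr_pair_def schr_system_def)

lemma schr_systemD:
  assumes "schr_system eps c \<mu> \<nu> f g"
  shows "continuous_on UNIV f" "continuous_on UNIV g" "f = T_eps eps c g \<nu>" "g = T_eps eps c f \<mu>"
    "(\<integral>x. f x \<partial>\<mu>) = (\<integral>x. g x \<partial>\<nu>)"
  using assms unfolding schr_system_def by blast+

lemma schr_system_swap: "schr_system eps c \<mu> \<nu> f g \<Longrightarrow> schr_system eps c \<nu> \<mu> g f"
  unfolding schr_system_def by argo

locale schroedinger = \<mu>: soft_ctransform \<mu> eps c + \<nu>: soft_ctransform \<nu> eps c
  for \<mu> \<nu> :: "'a::metric_space measure" and eps c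
begin

lemma sinkhorn_osc_contraction:
  fixes f g :: "'a \<Rightarrow> real"
  assumes f: "continuous_on UNIV f" and g: "continuous_on UNIV g"
    and C: "\<And>x y. c x y \<le> C" and osc: "osc_le (\<lambda>x. f x - g x) D"
  shows "osc_le (\<lambda>x. T_eps eps c (T_eps eps c f \<mu>) \<nu> x - T_eps eps c (T_eps eps c g \<mu>) \<nu> x)
    ((1 - exp (- 2 * C / eps)) * (1 - exp (- 2 * C / eps)) * D)"
  using \<nu>.T_eps_osc_contraction[OF \<mu>.continuous_on_T_eps[OF f] \<mu>.continuous_on_T_eps[OF g] C
      \<mu>.T_eps_osc_contraction[OF f g C osc]]
  by (simp add: mult.assoc)

lemma sinkhorn_contraction_less_1:
  assumes C: "\<And>x y. c x y \<le> C"
  shows "(1 - exp (- 2 * C / eps)) * (1 - exp (- 2 * C / eps)) < 1"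
proof -
  have "0 \<le> 1 - exp (- 2 * C / eps)" "1 - exp (- 2 * C / eps) < 1"
    using \<mu>.doeblin_constant_le_1[OF C] by simp_all
  then show ?thesis by (smt (verit) mult_left_le_one_le)
qed

text \<open>The density \<open>exp ((f x + g y - c x y) / eps)\<close> with \<open>g = T(f, \<mu>)\<close> has
  \<open>\<mu>\<close>-integral 1 in \<open>x\<close> and \<open>\<nu>\<close>-integral \<open>exp (- k / eps)\<close> in \<open>y\<close>.\<close>

lemma mass_balance:
  fixes f :: "'a \<Rightarrow> real"
  assumes f: "continuous_on UNIV f" and fixpoint: "\<And>x. T_eps eps c (T_eps eps c f \<mu>) \<nu> x = f x + k"
  shows "k = 0"
proof -
  obtain C where C: "\<And>x y. c x y \<le> C" using \<mu>.cost_bounded by blast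
  define g where "g = T_eps eps c f \<mu>"
  have g: "continuous_on UNIV g" unfolding g_def by (rule \<mu>.continuous_on_T_eps[OF f])
  define a where "a x y = gibbs_kernel eps c \<mu> f y x" for x y
  have a: "continuous_on UNIV (\<lambda>p. a (fst p) (snd p))"
    unfolding a_def
    by (rule continuous_on_prod_swap[OF doeblin_kernel.kernel_continuous[OF \<mu>.doeblin_gibbs_kernel[OF f C]]])
  have "gibbs_kernel eps c \<nu> g x y = exp (k / eps) * a x y" for x y
  proof -
    have "(f x + k + g y - c x y) / eps = k / eps + (g y + f x - c y x) / eps"
      using \<nu>.cost_sym[of x y] \<nu>.eps_pos by (simp add: field_simps)
    then show ?thesis
      by (simp add: gibbs_kernel_def a_def fixpoint[folded g_def] flip: g_def exp_add)
  qed
  then have "exp (k / eps) * (\<integral>y. a x y \<partial>\<nu>) = 1" for x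
    using \<nu>.integral_gibbs_kernel[OF g, of x] by simp
  then have inner_\<nu>: "(\<integral>y. a x y \<partial>\<nu>) = 1 / exp (k / eps)" for x
    by (simp add: field_simps)
  have inner_\<mu>: "(\<integral>x. a x y \<partial>\<mu>) = 1" for y
    unfolding a_def by (rule \<mu>.integral_gibbs_kernel[OF f])
  have "(\<integral>y. (\<integral>x. a x y \<partial>\<mu>) \<partial>\<nu>) = (\<integral>x. (\<integral>y. a x y \<partial>\<nu>) \<partial>\<mu>)"
    using integral_swap_continuous[OF \<mu>.compact_borel_prob_axioms \<nu>.compact_borel_prob_axioms a] .
  then have "exp (k / eps) = 1"
    by (simp add: inner_\<mu> inner_\<nu> \<mu>.prob_space \<nu>.prob_space)
  then show ?thesis using \<mu>.eps_pos by simp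
qed

end

context schroedinger
begin

lemma schr_system_exists: "\<exists>f g. schr_system eps c \<mu> \<nu> f g"
proof -
  obtain C where C: "\<And>x y. c x y \<le> C" using \<mu>.cost_bounded by blast
  define F where "F f = T_eps eps c (T_eps eps c f \<mu>) \<nu>" for f
  have "\<exists>f k. continuous_on UNIV f \<and> (\<forall>x. F f x = f x + k)"
  proof (rule osc_contraction_fixpoint_mod_const[OF \<mu>.compact_UNIV _ _ _ _
        sinkhorn_contraction_less_1[OF C]])
    show "continuous_on UNIV (F f)" if "continuous_on UNIV f" for f
      unfolding F_def by (intro \<nu>.continuous_on_T_eps \<mu>.continuous_on_T_eps that)
    show "osc_le (\<lambda>x. F f x - F g x) ((1 - exp (- 2 * C / eps)) * (1 - exp (- 2 * C / eps)) * D)"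
      if "continuous_on UNIV f" "continuous_on UNIV g" "osc_le (\<lambda>x. f x - g x) D" for f g D
      unfolding F_def by (rule sinkhorn_osc_contraction[OF that(1,2) C that(3)])
    show "\<bar>F f x - F g x\<bar> \<le> e"
      if "continuous_on UNIV f" "continuous_on UNIV g" "\<And>x. \<bar>f x - g x\<bar> \<le> e" for f g e x
      unfolding F_def
      by (intro \<nu>.T_eps_nonexpansive \<mu>.continuous_on_T_eps \<mu>.T_eps_nonexpansive that)
    show "0 \<le> (1 - exp (- 2 * C / eps)) * (1 - exp (- 2 * C / eps))"
      by simp
  qed blast
  then obtain f k where f: "continuous_on UNIV f" and fixpoint: "\<And>x. F f x = f x + k"
    by blast
  have "k = 0" using mass_balance[OF f] fixpoint by (simp add: F_def)
  define g where "g = T_eps eps c f \<mu>"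
  have g: "continuous_on UNIV g" unfolding g_def by (rule \<mu>.continuous_on_T_eps[OF f])
  define t where "t = ((\<integral>y. g y \<partial>\<nu>) - (\<integral>x. f x \<partial>\<mu>)) / 2"
  have "schr_system eps c \<mu> \<nu> (\<lambda>x. f x + t) (\<lambda>y. g y + - t)"
    unfolding schr_system_def
  proof (intro conjI)
    show "continuous_on UNIV (\<lambda>x. f x + t)" "continuous_on UNIV (\<lambda>y. g y + - t)"
      by (intro continuous_intros f g)+
    show "(\<lambda>x. f x + t) = T_eps eps c (\<lambda>y. g y + - t) \<nu>"
      using fixpoint \<open>k = 0\<close> \<nu>.T_eps_add_const[OF g, of "- t"] by (simp add: fun_eq_iff F_def g_def)
    show "(\<lambda>y. g y + - t) = T_eps eps c (\<lambda>x. f x + t) \<mu>"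
      by (simp add: fun_eq_iff \<mu>.T_eps_add_const[OF f] g_def)
    show "(\<integral>x. f x + t \<partial>\<mu>) = (\<integral>y. g y + - t \<partial>\<nu>)"
      using \<mu>.integrable_continuous[OF f] \<nu>.integrable_continuous[OF g]
      by (simp add: t_def \<mu>.prob_space \<nu>.prob_space field_simps)
  qed
  then show ?thesis by blast
qed

lemma schr_system_unique:
  assumes sys: "schr_system eps c \<mu> \<nu> f g" and sys': "schr_system eps c \<mu> \<nu> f' g'"
  shows "f = f' \<and> g = g'"
proof -
  obtain C where C: "\<And>x y. c x y \<le> C" using \<mu>.cost_bounded by blast
  note f = schr_systemD(1)[OF sys] and f' = schr_systemD(1)[OF sys']
  have fixpoints: "T_eps eps c (T_eps eps c f \<mu>) \<nu> = f" "T_eps eps c (T_eps eps c f' \<mu>) \<nu> = f'"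
    using schr_systemD(3,4)[OF sys] schr_systemD(3,4)[OF sys'] by simp_all
  define h where "h x = f x - f' x" for x
  have h: "continuous_on UNIV h" unfolding h_def by (intro continuous_intros f f')
  have "h x = h undefined" for x
  proof (rule constant_if_osc_contracting[OF \<mu>.compact_UNIV h sinkhorn_contraction_less_1[OF C]])
    fix D assume "osc_le h D"
    from sinkhorn_osc_contraction[OF f f' C this[unfolded h_def]]
    show "osc_le h ((1 - exp (- 2 * C / eps)) * (1 - exp (- 2 * C / eps)) * D)"
      unfolding fixpoints h_def .
  qed
  then have f_eq: "f = (\<lambda>x. f' x + h undefined)"
    by (auto simp: h_def fun_eq_iff algebra_simps)
  have g_eq: "g = (\<lambda>y. g' y - h undefined)"
    unfolding schr_systemD(4)[OF sys] schr_systemD(4)[OF sys'] f_eq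
    by (simp add: fun_eq_iff \<mu>.T_eps_add_const[OF f'])
  have "(\<integral>x. f' x + h undefined \<partial>\<mu>) = (\<integral>y. g' y - h undefined \<partial>\<nu>)"
    using schr_systemD(5)[OF sys] unfolding f_eq g_eq .
  then have "h undefined = 0"
    using schr_systemD(5)[OF sys'] \<mu>.integrable_continuous[OF f']
      \<nu>.integrable_continuous[OF schr_systemD(2)[OF sys']]
    by (simp add: \<mu>.prob_space \<nu>.prob_space)
  then show ?thesis using f_eq g_eq by simp
qed

end

context schroedinger
begin

lemma ex1_schr_system: "\<exists>!p. schr_system eps c \<mu> \<nu> (fst p) (snd p)"
proof -
  obtain f g where sys: "schr_system eps c \<mu> \<nu> f g" using schr_system_exists by blast
  show ?thesis
  proof (rule ex1I[of _ "(f, g)"])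
    show "schr_system eps c \<mu> \<nu> (fst (f, g)) (snd (f, g))" using sys by simp
    show "p = (f, g)" if "schr_system eps c \<mu> \<nu> (fst p) (snd p)" for p
      using schr_system_unique[OF that sys] by (simp add: prod_eq_iff)
  qed
qed

lemma ex1_schr_system_swapped: "\<exists>!p. schr_system eps c \<nu> \<mu> (fst p) (snd p)"
proof -
  obtain f g where sys: "schr_system eps c \<mu> \<nu> f g" using schr_system_exists by blast
  show ?thesis
  proof (rule ex1I[of _ "(g, f)"])
    show "schr_system eps c \<nu> \<mu> (fst (g, f)) (snd (g, f))" using schr_system_swap[OF sys] by simp
    show "p = (g, f)" if "schr_system eps c \<nu> \<mu> (fst p) (snd p)" for p
      using schr_system_unique[OF schr_system_swap[OF that] sys] by (simp add: prod_eq_iff)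
  qed
qed

lemma schr_pot_system: "schr_system eps c \<mu> \<nu> (schr_pot eps c \<mu> \<nu>) (schr_pot eps c \<nu> \<mu>)"
proof -
  have sys: "schr_system eps c \<mu> \<nu> (fst (schr_pair eps c \<mu> \<nu>)) (snd (schr_pair eps c \<mu> \<nu>))"
    unfolding schr_pair_eq_The by (rule theI'[OF ex1_schr_system])
  have "schr_system eps c \<nu> \<mu> (fst (schr_pair eps c \<nu> \<mu>)) (snd (schr_pair eps c \<nu> \<mu>))"
    unfolding schr_pair_eq_The by (rule theI'[OF ex1_schr_system_swapped])
  then have "schr_system eps c \<mu> \<nu> (snd (schr_pair eps c \<nu> \<mu>)) (fst (schr_pair eps c \<nu> \<mu>))"
    by (rule schr_system_swap)
  then have "snd (schr_pair eps c \<mu> \<nu>) = fst (schr_pair eps c \<nu> \<mu>)"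
    using schr_system_unique[OF sys] by blast
  then show ?thesis using sys by (simp add: schr_pot_def)
qed

lemma K_op_eq_kernel_op: "K_op eps c \<mu> \<nu> = kernel_op \<nu> (gibbs_kernel eps c \<nu> (schr_pot eps c \<nu> \<mu>))"
  using schr_systemD(3)[OF schr_pot_system]
  by (simp add: fun_eq_iff K_op_def kernel_op_def k_eps_def gibbs_kernel_def)

lemma contracting_K_op:
  assumes C: "\<And>x y. c x y \<le> C"
  shows "contracting_markov_operator (K_op eps c \<mu> \<nu>) (1 - exp (- 2 * C / eps))"
  unfolding K_op_eq_kernel_op
  by (rule doeblin_kernel.contracting_markov_operator_kernel_op[OF
        \<nu>.doeblin_gibbs_kernel[OF schr_systemD(2)[OF schr_pot_system] C]])

end

theorem mainTheorem17:
  fixes eps :: real and c :: "'a::metric_space \<Rightarrow> 'a \<Rightarrow> real"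
    and \<mu> \<nu> :: "'a measure"
  assumes cpt: "compact (UNIV :: 'a set)"
    and eps: "eps > 0"
    and c_cont: "continuous_on UNIV (\<lambda>(x, y). c x y)"
    and c_sym: "\<And>x y. c x y = c y x"
    and c_nonneg: "\<And>x y. c x y \<ge> 0"
    and kern_pd: "pos_def_kernel (\<lambda>x y. exp (- c x y / eps))"
    and kern_univ: "universal_kernel (\<lambda>x y. exp (- c x y / eps))"
    and \<mu>: "prob_space \<mu>" "sets \<mu> = sets borel"
    and \<nu>: "prob_space \<nu>" "sets \<nu> = sets borel"
  shows
    \<comment> \<open>maps C(X) into C(X)\<close>
    "(\<forall>\<phi>. continuous_on UNIV \<phi> \<longrightarrow> continuous_on UNIV (L_op eps c \<mu> \<nu> \<phi>))
     \<comment> \<open>linear on C(X)\<close>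
     \<and> (\<forall>\<phi> \<psi> a b. continuous_on UNIV \<phi> \<longrightarrow> continuous_on UNIV \<psi> \<longrightarrow>
          L_op eps c \<mu> \<nu> (\<lambda>x. a * \<phi> x + b * \<psi> x)
            = (\<lambda>x. a * L_op eps c \<mu> \<nu> \<phi> x + b * L_op eps c \<mu> \<nu> \<psi> x))
     \<comment> \<open>well defined on the quotient C(X)/R: constants are mapped to constants\<close>
     \<and> (\<forall>\<phi> l. continuous_on UNIV \<phi> \<longrightarrow>
          (\<exists>\<kappa>. \<forall>x. L_op eps c \<mu> \<nu> (\<lambda>y. \<phi> y + l) x = L_op eps c \<mu> \<nu> \<phi> x + \<kappa>))
     \<comment> \<open>continuous (bounded) for the quotient norm\<close>
     \<and> (\<exists>C. \<forall>\<phi>. continuous_on UNIV \<phi> \<longrightarrow>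
          quot_norm (L_op eps c \<mu> \<nu> \<phi>) \<le> C * quot_norm \<phi>)
     \<comment> \<open>injective on C(X)/R\<close>
     \<and> (\<forall>\<phi> \<psi>. continuous_on UNIV \<phi> \<longrightarrow> continuous_on UNIV \<psi> \<longrightarrow>
          (\<exists>\<kappa>. \<forall>x. L_op eps c \<mu> \<nu> \<phi> x = L_op eps c \<mu> \<nu> \<psi> x + \<kappa>) \<longrightarrow>
          (\<exists>\<kappa>. \<forall>x. \<phi> x = \<psi> x + \<kappa>))
     \<comment> \<open>surjective on C(X)/R\<close>
     \<and> (\<forall>\<psi>. continuous_on UNIV \<psi> \<longrightarrow>
          (\<exists>\<phi>. continuous_on UNIV \<phi> \<and> (\<exists>\<kappa>. \<forall>x. L_op eps c \<mu> \<nu> \<phi> x = \<psi> x + \<kappa>)))"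
proof -
  have "soft_ctransform \<mu> eps c" "soft_ctransform \<nu> eps c"
    using assms by (simp_all add: soft_ctransform_def soft_ctransform_axioms_def
        compact_borel_prob_def compact_borel_prob_axioms_def)
  then interpret schroedinger \<mu> \<nu> eps c + swapped: schroedinger \<nu> \<mu> eps c
    by (simp_all add: schroedinger_def)
  obtain C where C: "\<And>x y. c x y \<le> C" using \<mu>.cost_bounded by blast
  define \<kappa> where "\<kappa> = 1 - exp (- 2 * C / eps)"
  define P where "P \<phi> = K_op eps c \<mu> \<nu> (K_op eps c \<nu> \<mu> \<phi>)" for \<phi>
  interpret P: contracting_markov_operator P "\<kappa> * \<kappa>"
    unfolding P_def \<kappa>_def
    by (intro contracting_markov_operator_comp contracting_K_op swapped.contracting_K_op C)
  have L_op_eq: "L_op eps c \<mu> \<nu> = (\<lambda>\<phi> x. \<phi> x - P \<phi> x)"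
    by (simp add: fun_eq_iff L_op_def P_def)
  show ?thesis
    unfolding L_op_eq by (rule P.id_minus_bij_mod_const)
qed

end
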